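(* Let $(x_n)$ be a nonincreasing sequence of positive reals that is interval-filling and whose cardinal function $f$ satisfies $\mathrm{rng}(f)=\{1,m\}$ for some integer $m\ge3$. Then $x_k\le\frac12 r_k$ for all $k\in\mathbb{N}$.
   Context: For a summable sequence $\mathbf{x}=(x_n)$ of positive reals, $\mathcal{A}(\mathbf{x})=\{\sum_{n\in A}x_n: A\subseteq\mathbb{N}\}$ is its achievement set and its cardinal function $f$ assigns to $x\in\mathcal{A}(\mathbf{x})$ the cardinality (a positive integer, $\omega$, or $\mathfrak{c}$) of $\{(\varepsilon_n)\in\{0,1\}^{\mathbb{N}}:\sum\varepsilon_nx_n=x\}$. The sequence is interval-filling if $\mathcal{A}(\mathbf{x})$ is an interval. The tail sums are $r_n=\sum_{k=n+1}^\infty x_k$. *)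

theory Defs
  imports "HOL-Analysis.Analysis"
begin

text \<open>Sequences are indexed by nat (first term at index 0).
  A subset A of indices encodes the 0-1 sequence (indicator of A).\<close>

definition achievement_set :: "(nat \<Rightarrow> real) \<Rightarrow> real set" where
  "achievement_set x = {s. \<exists>A. (x has_sum s) A}"

definition representations :: "(nat \<Rightarrow> real) \<Rightarrow> real \<Rightarrow> nat set set" where
  "representations x s = {A. (x has_sum s) A}"

definition cardinal_range_eq :: "(nat \<Rightarrow> real) \<Rightarrow> nat set \<Rightarrow> bool" where
  "cardinal_range_eq x S \<longleftrightarrow>
     (\<forall>s\<in>achievement_set x. finite (representations x s)) \<and>
     (\<lambda>s. card (representations x s)) ` achievement_set x = S"

definition interval_filling :: "(nat \<Rightarrow> real) \<Rightarrow> bool" where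
  "interval_filling x \<longleftrightarrow> is_interval (achievement_set x)"

definition tail_sum :: "(nat \<Rightarrow> real) \<Rightarrow> nat \<Rightarrow> real" where
  "tail_sum x k = (\<Sum>n. x (n + Suc k))"

end

theory Submission
  imports Defs
begin

(* Suppose r_k < 2 x_k.  A representation of a value y < 2 x_k uses at most one index j \<le> k,
   so the representations of y are its tail representations (subsets of {k+1, k+2, ...})
   together with the tail representations of the values y - x_j, each extended by j.
   Complementation inside the tail pairs tail representations of z and r_k - z, and one of
   z, r_k - z lies below x_k, where all representations are tail representations; hence every
   z in [0, r_k] has 1 or m tail representations.  Let J = {j \<le> k. x_j \<le> r_k}, a set with
   n \<ge> 1 elements.  At the largest term x_j with j in J, a value in {1, m} plus a sum of n values
   from {1, m} must again lie in {1, m}, which forces n = m - 1.  Just above r_k, where the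
   tail has no representations, the count is a sum of n values from {1, m}, hence equal to
   m - 1 or at least 2m - 2, and neither lies in {1, m} when m \<ge> 3. *)

definition tail_representations :: "(nat \<Rightarrow> real) \<Rightarrow> nat \<Rightarrow> real \<Rightarrow> nat set set" where
  "tail_representations x k z = {B. B \<subseteq> {Suc k..} \<and> (x has_sum z) B}"

lemma representations_nonempty_iff: "representations x z \<noteq> {} \<longleftrightarrow> z \<in> achievement_set x"
  by (auto simp: representations_def achievement_set_def)

lemma cardinal_range_eq_finite_representations:
  assumes "cardinal_range_eq x S"
  shows "finite (representations x z)"
  by (metis assms cardinal_range_eq_def finite.emptyI representations_nonempty_iff)

lemma cardinal_range_eq_card_representations:
  assumes "cardinal_range_eq x S" "z \<in> achievement_set x"
  shows "card (representations x z) \<in> S"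
  using assms unfolding cardinal_range_eq_def by blast

lemma cardinal_range_eq_card_representations_nonzero:
  assumes "cardinal_range_eq x S" "card (representations x z) \<noteq> 0"
  shows "card (representations x z) \<in> S"
  using assms cardinal_range_eq_card_representations by (metis card.empty representations_nonempty_iff)

lemma has_sum_tail_sum:
  fixes x :: "nat \<Rightarrow> real"
  assumes "\<And>n. 0 \<le> x n" "summable x"
  shows "(x has_sum tail_sum x k) {Suc k..}"
proof -
  have "((x \<circ> plus (Suc k)) has_sum tail_sum x k) UNIV"
    unfolding tail_sum_def o_def using assms
    by (subst add.commute, intro sums_nonneg_imp_has_sum summable_sums summable_ignore_initial_segment) auto
  then have "(x has_sum tail_sum x k) (range (plus (Suc k)))"
    using has_sum_reindex[of "plus (Suc k)" UNIV x] by simp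
  also have "range (plus (Suc k)) = {Suc k..}"
    using image_add_atLeast[of "Suc k" 0] by simp
  finally show ?thesis .
qed

lemma atLeastAtMost_suminf_subset_achievement_set:
  fixes x :: "nat \<Rightarrow> real"
  assumes "\<And>n. 0 \<le> x n" "summable x" "interval_filling x"
  shows "{0..suminf x} \<subseteq> achievement_set x"
proof
  fix z assume z: "z \<in> {0..suminf x}"
  have "0 \<in> achievement_set x"
    unfolding achievement_set_def using has_sum_empty by blast
  moreover have "suminf x \<in> achievement_set x"
    using sums_nonneg_imp_has_sum[OF summable_sums] assms unfolding achievement_set_def by blast
  ultimately show "z \<in> achievement_set x"
    by (rule mem_is_interval_1_I[OF assms(3)[unfolded interval_filling_def]]) (use z in auto)
qed

lemma term_le_has_sum:
  fixes x :: "nat \<Rightarrow> real"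
  assumes "\<And>n. 0 \<le> x n" "(x has_sum s) A" "i \<in> A"
  shows "x i \<le> s"
  using finite_sum_le_has_sum[OF assms(2), of "{i}"] assms by auto

lemma representations_eq_tail_representations:
  fixes x :: "nat \<Rightarrow> real"
  assumes "\<And>n. 0 < x n" "decseq x" "z < x k"
  shows "representations x z = tail_representations x k z"
proof -
  have "A \<subseteq> {Suc k..}" if "(x has_sum z) A" for A
  proof
    fix i assume "i \<in> A"
    then have "x i \<le> z"
      using term_le_has_sum[OF _ that] assms(1) less_imp_le by blast
    then show "i \<in> {Suc k..}"
      using assms(3) decseqD[OF assms(2), of i k] by (cases "i \<le> k") auto
  qed
  then show ?thesis
    unfolding representations_def tail_representations_def by auto
qed

lemma tail_representations_eq_empty:
  fixes x :: "nat \<Rightarrow> real"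
  assumes "\<And>n. 0 \<le> x n" "summable x" "tail_sum x k < z"
  shows "tail_representations x k z = {}"
  using has_sum_mono2[OF _ has_sum_tail_sum[OF assms(1,2)]] assms(1,3)
  unfolding tail_representations_def by fastforce

lemma complement_mem_tail_representations:
  fixes x :: "nat \<Rightarrow> real"
  assumes "(x has_sum r) {Suc k..}" "B \<in> tail_representations x k z"
  shows "{Suc k..} - B \<in> tail_representations x k (r - z)"
  using has_sum_Diff[OF assms(1)] assms(2) unfolding tail_representations_def by auto

lemma card_tail_representations_complement:
  fixes x :: "nat \<Rightarrow> real"
  assumes "\<And>n. 0 \<le> x n" "summable x"
  shows "card (tail_representations x k z) = card (tail_representations x k (tail_sum x k - z))"
proof (rule bij_betw_same_card, rule bij_betw_byWitness)
  note complement = complement_mem_tail_representations[OF has_sum_tail_sum[OF assms]]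
  show "(\<lambda>B. {Suc k..} - B) ` tail_representations x k z \<subseteq> tail_representations x k (tail_sum x k - z)"
    using complement by blast
  show "(\<lambda>B. {Suc k..} - B) ` tail_representations x k (tail_sum x k - z) \<subseteq> tail_representations x k z"
    using complement[where k = k and z = "tail_sum x k - z"] by auto
qed (auto simp: tail_representations_def)

lemma term_le_tail_sum_if_interval_filling:
  fixes x :: "nat \<Rightarrow> real"
  assumes pos: "\<And>n. 0 < x n" and "summable x" "decseq x" "interval_filling x"
  shows "x k \<le> tail_sum x k"
proof (rule ccontr)
  assume "\<not> x k \<le> tail_sum x k"
  define y where "y = (tail_sum x k + x k) / 2"
  have "tail_sum x k < y" "y < x k"
    using \<open>\<not> x k \<le> tail_sum x k\<close> by (auto simp: y_def)
  have nonneg: "\<And>n. 0 \<le> x n"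
    using pos less_imp_le by blast
  have "x k \<le> suminf x"
    using sum_le_suminf[of x "{k}"] nonneg assms(2) by simp
  moreover have "0 \<le> tail_sum x k"
    using has_sum_nonneg[OF has_sum_tail_sum[OF nonneg assms(2)]] nonneg by blast
  ultimately have "y \<in> achievement_set x"
    using atLeastAtMost_suminf_subset_achievement_set[OF nonneg assms(2,4)]
      \<open>y < x k\<close> \<open>tail_sum x k < y\<close> by auto
  then have "tail_representations x k y \<noteq> {}"
    using representations_eq_tail_representations[OF pos assms(3) \<open>y < x k\<close>]
    by (metis representations_nonempty_iff)
  then show False
    using tail_representations_eq_empty[OF nonneg assms(2) \<open>tail_sum x k < y\<close>] by simp
qed

lemma representations_below_twice_term:
  fixes x :: "nat \<Rightarrow> real"
  assumes pos: "\<And>n. 0 < x n" and dec: "decseq x" and y: "y < 2 * x k"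
  shows "representations x y = tail_representations x k y \<union>
    (\<Union>j\<in>{j. j \<le> k \<and> x j \<le> y}. insert j ` tail_representations x k (y - x j))"
    (is "_ = ?R \<union> ?U")
proof
  have nonneg: "\<And>n. 0 \<le> x n"
    using pos less_imp_le by blast
  show "representations x y \<subseteq> ?R \<union> ?U"
  proof
    fix A assume "A \<in> representations x y"
    then have A: "(x has_sum y) A"
      by (simp add: representations_def)
    show "A \<in> ?R \<union> ?U"
    proof (cases "A \<subseteq> {Suc k..}")
      case True
      then show ?thesis
        using A by (simp add: tail_representations_def)
    next
      case False
      then obtain i where i: "i \<in> A" "i \<le> k"
        by (meson atLeast_iff not_less_eq_eq subsetI)
      have "A - {i} \<subseteq> {Suc k..}"
      proof
        fix j assume j: "j \<in> A - {i}"
        \<comment> \<open>two terms of index at most k already sum to at least 2 x k > y\<close>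
        have "x i + x j \<le> y"
          using finite_sum_le_has_sum[OF A, of "{i, j}"] i j nonneg by auto
        then show "j \<in> {Suc k..}"
          using y decseqD[OF dec, of i k] decseqD[OF dec, of j k] i
          by (cases "j \<le> k") auto
      qed
      moreover have "(x has_sum (y - x i)) (A - {i})"
        using has_sum_Diff[OF A has_sum_finite[where F = "{i}"]] i by simp
      ultimately have "A - {i} \<in> tail_representations x k (y - x i)"
        by (simp add: tail_representations_def)
      moreover have "x i \<le> y"
        using term_le_has_sum[OF nonneg A i(1)] .
      ultimately show ?thesis
        using i by (auto intro!: rev_image_eqI[of "A - {i}"])
    qed
  qed
  show "?R \<union> ?U \<subseteq> representations x y"
  proof
    fix A assume "A \<in> ?R \<union> ?U"
    then consider "A \<in> ?R"
      | j B where "j \<le> k" "B \<in> tail_representations x k (y - x j)" "A = insert j B"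
      by auto
    then show "A \<in> representations x y"
    proof cases
      case 1
      then show ?thesis
        by (simp add: representations_def tail_representations_def)
    next
      case (2 j B)
      then have "j \<notin> B" "(x has_sum (y - x j)) B"
        by (auto simp: tail_representations_def)
      then show ?thesis
        using has_sum_insert[of j B x "y - x j"] 2(3) by (simp add: representations_def)
    qed
  qed
qed

lemma card_representations_below_twice_term:
  fixes x :: "nat \<Rightarrow> real"
  assumes pos: "\<And>n. 0 < x n" and dec: "decseq x" and y: "y < 2 * x k"
    and fin: "finite (representations x y)"
  shows "card (representations x y) = card (tail_representations x k y) +
    (\<Sum>j | j \<le> k \<and> x j \<le> y. card (tail_representations x k (y - x j)))"
proof -
  let ?D = "{j. j \<le> k \<and> x j \<le> y}"
  let ?part = "\<lambda>j. insert j ` tail_representations x k (y - x j)"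
  note decomp = representations_below_twice_term[OF pos dec y]
  \<comment> \<open>the parts are told apart by their unique index of at most k\<close>
  have low_part: "A \<inter> {..k} = {j}" if "A \<in> ?part j" "j \<le> k" for A j
    using that by (auto simp: tail_representations_def)
  have low_tail: "A \<inter> {..k} = {}" if "A \<in> tail_representations x k z" for A z
    using that by (auto simp: tail_representations_def)
  have fin_part: "finite (?part j)" if "j \<in> ?D" for j
    using fin that unfolding decomp by (auto intro: finite_subset)
  have "card (representations x y) = card (tail_representations x k y) + card (\<Union>j\<in>?D. ?part j)"
    unfolding decomp
  proof (rule card_Un_disjoint)
    show "finite (tail_representations x k y)" "finite (\<Union>j\<in>?D. ?part j)"
      using fin unfolding decomp by auto
    show "tail_representations x k y \<inter> (\<Union>j\<in>?D. ?part j) = {}"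
      using low_part low_tail by fastforce
  qed
  also have "card (\<Union>j\<in>?D. ?part j) = (\<Sum>j\<in>?D. card (?part j))"
  proof (rule card_UN_disjoint)
    show "\<forall>j\<in>?D. finite (?part j)"
      using fin_part by blast
    show "\<forall>i\<in>?D. \<forall>j\<in>?D. i \<noteq> j \<longrightarrow> ?part i \<inter> ?part j = {}"
    proof (intro ballI impI equals0I)
      fix i j A assume "i \<in> ?D" "j \<in> ?D" "i \<noteq> j" "A \<in> ?part i \<inter> ?part j"
      then show False
        using low_part[of A i] low_part[of A j] by auto
    qed
  qed simp
  also have "\<dots> = (\<Sum>j\<in>?D. card (tail_representations x k (y - x j)))"
  proof (rule sum.cong)
    fix j assume "j \<in> ?D"
    have "inj_on (insert j) (tail_representations x k (y - x j))"
    proof (rule inj_onI)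
      fix B C assume "B \<in> tail_representations x k (y - x j)" "C \<in> tail_representations x k (y - x j)"
        and "insert j B = insert j C"
      moreover have "j \<notin> B" "j \<notin> C"
        using calculation(1,2) \<open>j \<in> ?D\<close> by (auto simp: tail_representations_def)
      ultimately show "B = C"
        by (metis Diff_insert_absorb)
    qed
    then show "card (?part j) = card (tail_representations x k (y - x j))"
      by (rule card_image)
  qed simp
  finally show ?thesis .
qed

lemma sum_1_or_m_eq_card_or_ge:
  fixes t :: "'a \<Rightarrow> nat"
  assumes "finite J" "\<And>j. j \<in> J \<Longrightarrow> t j \<in> {1, m}" "1 \<le> m"
  shows "sum t J = card J \<or> m + card J - 1 \<le> sum t J"
proof (cases "\<forall>j\<in>J. t j = 1")
  case True
  then show ?thesis
    by simp
next
  case False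
  then obtain i where i: "i \<in> J" "t i = m"
    using assms(2) by blast
  have "card (J - {i}) \<le> sum t (J - {i})"
    using sum_mono[of "J - {i}" "\<lambda>_. 1" t] assms(2,3) by fastforce
  then have "m + card J - 1 \<le> t i + sum t (J - {i})"
    using i assms(1) card_gt_0_iff by fastforce
  then show ?thesis
    using sum.remove[OF assms(1) i(1), of t] by simp
qed

context
  fixes x :: "nat \<Rightarrow> real" and m k :: nat
  assumes pos: "\<And>n. 0 < x n"
    and summ: "summable x"
    and noninc: "decseq x"
    and fill: "interval_filling x"
    and m3: "m \<ge> 3"
    and rng: "cardinal_range_eq x {1, m}"
    and short_tail: "tail_sum x k < 2 * x k"
begin

lemma card_tail_representations_1_or_m:
  assumes "0 \<le> z" "z \<le> tail_sum x k"
  shows "card (tail_representations x k z) \<in> {1, m}"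
proof -
  have nonneg: "\<And>n. 0 \<le> x n"
    using pos less_imp_le by blast
  have below_term: "card (tail_representations x k w) \<in> {1, m}" if "0 \<le> w" "w < x k" for w
  proof -
    have "x k \<le> suminf x"
      using sum_le_suminf[of x "{k}"] nonneg summ by simp
    then have "w \<in> achievement_set x"
      using atLeastAtMost_suminf_subset_achievement_set[OF nonneg summ fill] that by auto
    then have "card (representations x w) \<in> {1, m}"
      by (rule cardinal_range_eq_card_representations[OF rng])
    then show ?thesis
      using representations_eq_tail_representations[OF pos noninc that(2)] by simp
  qed
  show ?thesis
  proof (cases "z < x k")
    case True
    then show ?thesis
      using below_term assms(1) by blast
  next
    case False
    \<comment> \<open>as the tail sum is below 2 x k, the complementary value is below x k\<close>
    then have "card (tail_representations x k (tail_sum x k - z)) \<in> {1, m}"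
      using below_term short_tail assms by simp
    then show ?thesis
      using card_tail_representations_complement[OF nonneg summ] by simp
  qed
qed

lemma card_indices_le_tail_sum: "card {j. j \<le> k \<and> x j \<le> tail_sum x k} = m - 1"
proof -
  define J where "J = {j. j \<le> k \<and> x j \<le> tail_sum x k}"
  define w where "w = Max (x ` J)"
  have "finite J" "k \<in> J"
    using term_le_tail_sum_if_interval_filling[OF pos summ noninc fill] by (auto simp: J_def)
  then have le_w: "\<And>j. j \<in> J \<Longrightarrow> x j \<le> w" and "w \<in> x ` J"
    by (auto simp: w_def intro: Max_in)
  then have "w \<le> tail_sum x k" "x k \<le> w"
    using \<open>k \<in> J\<close> by (auto simp: J_def)
  then have low_w: "{j. j \<le> k \<and> x j \<le> w} = J"
    using le_w by (auto simp: J_def)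
  have "0 \<le> w" "w < 2 * x k"
    using \<open>x k \<le> w\<close> \<open>w \<le> tail_sum x k\<close> pos[of k] short_tail by linarith+
  then have count: "card (representations x w) = card (tail_representations x k w) +
      (\<Sum>j\<in>J. card (tail_representations x k (w - x j)))"
    using card_representations_below_twice_term[OF pos noninc _ cardinal_range_eq_finite_representations[OF rng]]
      low_w by simp
  have tail_w: "card (tail_representations x k w) \<in> {1, m}"
    using card_tail_representations_1_or_m \<open>0 \<le> w\<close> \<open>w \<le> tail_sum x k\<close> by blast
  have "(\<Sum>j\<in>J. card (tail_representations x k (w - x j))) = card J \<or>
      m + card J - 1 \<le> (\<Sum>j\<in>J. card (tail_representations x k (w - x j)))"
  proof (rule sum_1_or_m_eq_card_or_ge[OF \<open>finite J\<close> _])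
    show "card (tail_representations x k (w - x j)) \<in> {1, m}" if "j \<in> J" for j
      using card_tail_representations_1_or_m le_w[OF that] pos[of j] \<open>w \<le> tail_sum x k\<close> by simp
  qed (use m3 in simp)
  moreover have "card (representations x w) \<noteq> 0"
    using count tail_w m3 by auto
  then have "card (representations x w) \<in> {1, m}"
    by (rule cardinal_range_eq_card_representations_nonzero[OF rng])
  moreover have "card J \<noteq> 0"
    using \<open>finite J\<close> \<open>k \<in> J\<close> by auto
  ultimately have "card J = m - 1"
    using count tail_w m3 by auto
  then show ?thesis
    by (simp add: J_def)
qed

lemma short_tail_contradiction: False
proof -
  have nonneg: "\<And>n. 0 \<le> x n"
    using pos less_imp_le by blast
  define r where "r = tail_sum x k"
  have "\<forall>\<^sub>F y in at_right r. r < y \<and> y < 2 * x k \<and> (\<forall>j\<in>{..k}. r < x j \<longrightarrow> y < x j)"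
  proof (intro eventually_conj eventually_ball_finite ballI)
    show "\<forall>\<^sub>F y in at_right r. r < y"
      by (rule eventually_at_right_less)
    show "\<forall>\<^sub>F y in at_right r. y < 2 * x k"
      using eventually_at_right_real[of r "2 * x k"] short_tail
      by (auto simp: r_def elim: eventually_mono)
    show "\<forall>\<^sub>F y in at_right r. r < x j \<longrightarrow> y < x j" for j
      using eventually_at_right_real[of r "x j"] by (cases "r < x j") (auto elim: eventually_mono)
  qed simp
  then obtain y where y: "r < y" "y < 2 * x k" and gap: "\<And>j. j \<le> k \<Longrightarrow> r < x j \<Longrightarrow> y < x j"
    using eventually_happens'[OF trivial_limit_at_right_real] by fastforce
  define J where "J = {j. j \<le> k \<and> x j \<le> r}"
  have "finite J" "card J = m - 1"
    using card_indices_le_tail_sum by (simp_all add: J_def r_def)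
  have "{j. j \<le> k \<and> x j \<le> y} = J"
    using gap y(1) by (force simp: J_def)
  then have count: "card (representations x y) = (\<Sum>j\<in>J. card (tail_representations x k (y - x j)))"
    using card_representations_below_twice_term[OF pos noninc y(2) cardinal_range_eq_finite_representations[OF rng]]
      tail_representations_eq_empty[OF nonneg summ y(1)[unfolded r_def]]
    by (simp add: r_def)
  have "card (representations x y) = card J \<or> m + card J - 1 \<le> card (representations x y)"
    unfolding count
  proof (rule sum_1_or_m_eq_card_or_ge[OF \<open>finite J\<close> _])
    fix j assume "j \<in> J"
    \<comment> \<open>y - x j < 2 x k - x k \<le> r\<close>
    then have "0 \<le> y - x j" "y - x j \<le> tail_sum x k"
      using y decseqD[OF noninc, of j k] term_le_tail_sum_if_interval_filling[OF pos summ noninc fill]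
      by (auto simp: J_def r_def)
    then show "card (tail_representations x k (y - x j)) \<in> {1, m}"
      by (rule card_tail_representations_1_or_m)
  qed (use m3 in simp)
  then have count_cases: "card (representations x y) = m - 1 \<or> 2 * m - 2 \<le> card (representations x y)"
    using \<open>card J = m - 1\<close> m3 by auto
  then have "card (representations x y) \<noteq> 0"
    using m3 by auto
  then have "card (representations x y) \<in> {1, m}"
    by (rule cardinal_range_eq_card_representations_nonzero[OF rng])
  then show False
    using count_cases m3 by auto
qed

end

theorem lemma3p3:
  fixes x :: "nat \<Rightarrow> real" and m :: nat
  assumes pos: "\<And>n. x n > 0"
    and summ: "summable x"
    and noninc: "decseq x"
    and fill: "interval_filling x"
    and m3: "m \<ge> 3"
    and rng: "cardinal_range_eq x {1, m}"
  shows "\<forall>k. x k \<le> tail_sum x k / 2"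
proof
  fix k
  show "x k \<le> tail_sum x k / 2"
  proof (rule ccontr)
    assume "\<not> x k \<le> tail_sum x k / 2"
    then show False
      by (intro short_tail_contradiction[OF pos summ noninc fill m3 rng, where k = k]) simp
  qed
qed

end
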